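(* Let $X$ be a non-separable complex Hilbert space. Then there exists a rigid operator $T:X\to X$ such that $\mathrm{St}(T)=\emptyset$.
   Context: For a continuous linear operator $T$ on $X$: $\mathfrak{C}$ is the set of strictly increasing sequences $\omega=(\omega_n)$ of positive integers such that $T^{\omega_n}x\to x$ for some $x\neq0$; $\mathfrak{L}(\omega)=\{x:T^{\omega_n}x\to x\}$; $\mathrm{Rec}(T)=\bigcup_{\omega\in\mathfrak{C}}\mathfrak{L}(\omega)$ together with $0$ (the recurrent vectors). $T$ is rigid if $\mathfrak{L}(\omega)=X$ for some $\omega\in\mathfrak{C}$. A sequence $\omega\in\mathfrak{C}$ is stationary if $\overline{\mathfrak{L}(\omega)}=\overline{\mathfrak{L}(\mu)}$ for every subsequence $\mu$ of $\omega$. $\mathrm{St}(T)$ is the set of $x\in\mathrm{Rec}(T)$ such that every $\omega\in\mathfrak{C}$ with $x\in\mathfrak{L}(\omega)$ is stationary. *)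

theory Defs
  imports "HOL-Analysis.Analysis"
begin

text \<open>A complex Hilbert space is such a space that is also complete.\<close>

class complex_inner = real_normed_vector +
  fixes scaleC :: "complex \<Rightarrow> 'a \<Rightarrow> 'a"
    and cinner :: "'a \<Rightarrow> 'a \<Rightarrow> complex"
  assumes scaleC_add_right: "scaleC a (x + y) = scaleC a x + scaleC a y"
    and scaleC_add_left: "scaleC (a + b) x = scaleC a x + scaleC b x"
    and scaleC_scaleC: "scaleC a (scaleC b x) = scaleC (a * b) x"
    and scaleC_one: "scaleC 1 x = x"
    and scaleC_of_real: "scaleC (complex_of_real r) x = scaleR r x"
    and cinner_commute: "cinner x y = cnj (cinner y x)"
    and cinner_add_right: "cinner x (y + z) = cinner x y + cinner x z"
    and cinner_scaleC_right: "cinner x (scaleC a y) = a * cinner x y"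
    and cinner_nonneg: "0 \<le> Re (cinner x x)"
    and cinner_eq_zero_iff: "cinner x x = 0 \<longleftrightarrow> x = 0"
    and norm_eq_sqrt_cinner: "norm x = sqrt (Re (cinner x x))"

definition bounded_clinear_op :: "('a::complex_inner \<Rightarrow> 'a) \<Rightarrow> bool" where
  "bounded_clinear_op T \<longleftrightarrow> bounded_linear T \<and> (\<forall>c x. T (scaleC c x) = scaleC c (T x))"

definition recC :: "('a::real_normed_vector \<Rightarrow> 'a) \<Rightarrow> (nat \<Rightarrow> nat) set" where
  "recC T = {\<omega>. strict_mono \<omega> \<and> (\<forall>n. 0 < \<omega> n) \<and>
                 (\<exists>x. x \<noteq> 0 \<and> (\<lambda>n. (T ^^ \<omega> n) x) \<longlonglongrightarrow> x)}"

definition recL :: "('a::real_normed_vector \<Rightarrow> 'a) \<Rightarrow> (nat \<Rightarrow> nat) \<Rightarrow> 'a set" where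
  "recL T \<omega> = {x. (\<lambda>n. (T ^^ \<omega> n) x) \<longlonglongrightarrow> x}"

definition Rec :: "('a::real_normed_vector \<Rightarrow> 'a) \<Rightarrow> 'a set" where
  "Rec T = (\<Union>\<omega>\<in>recC T. recL T \<omega>) \<union> {0}"

definition rigid :: "('a::real_normed_vector \<Rightarrow> 'a) \<Rightarrow> bool" where
  "rigid T \<longleftrightarrow> (\<exists>\<omega>\<in>recC T. recL T \<omega> = UNIV)"

definition stationary :: "('a::real_normed_vector \<Rightarrow> 'a) \<Rightarrow> (nat \<Rightarrow> nat) \<Rightarrow> bool" where
  "stationary T \<omega> \<longleftrightarrow> \<omega> \<in> recC T \<and>
     (\<forall>r. strict_mono r \<longrightarrow> closure (recL T \<omega>) = closure (recL T (\<omega> \<circ> r)))"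

definition St :: "('a::real_normed_vector \<Rightarrow> 'a) \<Rightarrow> 'a set" where
  "St T = {x \<in> Rec T. \<forall>\<omega>\<in>recC T. x \<in> recL T \<omega> \<longrightarrow> stationary T \<omega>}"

end

theory Submission
  imports Defs
begin

text \<open>Take an uncountable orthonormal family (v_p), indexed by a subset of Cantor space, and let
T multiply v_p by \<lambda>_p = exp (2\<pi>i \<Sum>_{j \<in> A_p} 2^(-j^2)) and fix the orthogonal complement of
the family.  Here A_p \<subseteq> \<nat> is the set of codes of the finite prefixes of p, so the A_p are
infinite and pairwise almost disjoint.  Because the exponents j^2 are lacunary, if j^2 \<le> K \<le> a^2
for all j < a, then \<lambda>_p^(2^K) only sees the term j = a of the sum, up to an error that tends
to 0 as a \<rightarrow> \<infinity>.

With a = n + 1 and K = (n + 1)^2 this gives \<lambda>_p^(2^((n+1)^2)) \<rightarrow> 1 for every p, so T is rigid.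
Given x, only countably many coefficients \<langle>v_p, x\<rangle> are nonzero, so x \<bottom> v_g for some g.  Let
(a_m) enumerate A_g and let \<omega> alternate between 2^(a_m^2 - 1) and 2^(a_m^2).  For p \<noteq> g
eventually a_m \<notin> A_p, so \<lambda>_p^\<omega>_n \<rightarrow> 1 and x \<in> \<frak>L(\<omega>); but \<lambda>_g^\<omega>_2m \<rightarrow> -1, which forces
\<frak>L(\<omega>) \<subseteq> v_g^\<bottom>, whereas the odd subsequence of \<omega> is recurrent on the whole space.  Hence \<omega>
is not stationary and x \<notin> St T.\<close>

section \<open>Complex inner product spaces\<close>

lemma cinner_add_left: "cinner (x + y) z = cinner x z + cinner (y::'a::complex_inner) z"
  by (metis cinner_commute cinner_add_right complex_cnj_add)

lemma cinner_scaleC_left: "cinner (scaleC a x) y = cnj a * cinner (x::'a::complex_inner) y"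
  by (metis cinner_commute cinner_scaleC_right complex_cnj_mult)

lemma cinner_zero_right [simp]: "cinner (x::'a::complex_inner) 0 = 0"
  using cinner_add_right[of x 0 0] by simp

lemma cinner_zero_left [simp]: "cinner 0 (x::'a::complex_inner) = 0"
  using cinner_add_left[of 0 0 x] by simp

lemma cinner_minus_right: "cinner x (- y) = - cinner (x::'a::complex_inner) y"
  using cinner_add_right[of x y "-y"] by (simp add: add_eq_0_iff)

lemma cinner_diff_right: "cinner x (y - z) = cinner x y - cinner (x::'a::complex_inner) z"
  by (simp only: diff_conv_add_uminus cinner_add_right cinner_minus_right)

lemma cinner_scaleR_right: "cinner x (scaleR r y) = of_real r * cinner (x::'a::complex_inner) y"
  by (metis cinner_scaleC_right scaleC_of_real)

lemma cinner_sum_right: "cinner x (sum f F) = (\<Sum>p\<in>F. cinner (x::'a::complex_inner) (f p))"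
  by (induction F rule: infinite_finite_induct) (auto simp: cinner_add_right)

lemma cinner_sum_left: "cinner (sum f F) x = (\<Sum>p\<in>F. cinner (f p) (x::'a::complex_inner))"
  by (induction F rule: infinite_finite_induct) (auto simp: cinner_add_left)

lemma cinner_self: "cinner x x = complex_of_real ((norm (x::'a::complex_inner))\<^sup>2)"
proof -
  have "Im (cinner x x) = 0"
    using arg_cong[OF cinner_commute[of x x], of Im] by simp
  moreover have "Re (cinner x x) = (norm x)\<^sup>2"
    using norm_eq_sqrt_cinner[of x] cinner_nonneg[of x] by simp
  ultimately show ?thesis by (simp add: complex_eq_iff)
qed

lemma cinner_eq_zero_sym: "cinner x y = 0 \<longleftrightarrow> cinner y (x::'a::complex_inner) = 0"
  by (metis cinner_commute complex_cnj_zero_iff)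

lemma scaleC_zero_right [simp]: "scaleC a (0::'a::complex_inner) = 0"
  using scaleC_add_right[of a 0 0] by simp

lemma scaleC_zero_left [simp]: "scaleC 0 (x::'a::complex_inner) = 0"
  using scaleC_of_real[of 0 x] by simp

lemma scaleC_minus_left: "scaleC (- a) x = - scaleC a (x::'a::complex_inner)"
  using scaleC_add_left[of a "-a" x] by (simp add: add_eq_0_iff)

lemma scaleC_diff_left: "scaleC (a - b) x = scaleC a x - scaleC b (x::'a::complex_inner)"
  by (simp only: diff_conv_add_uminus scaleC_add_left scaleC_minus_left)

lemma scaleC_scaleR: "scaleC a (scaleR r x) = scaleR r (scaleC a (x::'a::complex_inner))"
  by (metis scaleC_of_real scaleC_scaleC mult.commute)

lemma norm_scaleC: "norm (scaleC a x) = cmod a * norm (x::'a::complex_inner)"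
proof -
  have "cinner (scaleC a x) (scaleC a x) = (a * cnj a) * cinner x x"
    by (simp add: cinner_scaleC_left cinner_scaleC_right mult_ac)
  also have "a * cnj a = complex_of_real ((cmod a)\<^sup>2)"
    by (metis complex_norm_square)
  finally have "complex_of_real ((norm (scaleC a x))\<^sup>2) = complex_of_real ((cmod a)\<^sup>2 * (norm x)\<^sup>2)"
    by (simp add: cinner_self)
  hence "(norm (scaleC a x))\<^sup>2 = (cmod a * norm x)\<^sup>2"
    by (simp only: of_real_eq_iff power_mult_distrib)
  thus ?thesis by (simp add: power2_eq_iff_nonneg)
qed

lemma pythagoras_cinner:
  assumes "cinner x y = 0"
  shows "(norm (x + y))\<^sup>2 = (norm x)\<^sup>2 + (norm (y::'a::complex_inner))\<^sup>2"
proof -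
  have "cinner (x + y) (x + y) = cinner x x + cinner y y"
    using assms cinner_eq_zero_sym[of x y] by (simp add: cinner_add_left cinner_add_right)
  hence "complex_of_real ((norm (x + y))\<^sup>2) = complex_of_real ((norm x)\<^sup>2 + (norm y)\<^sup>2)"
    by (simp add: cinner_self)
  thus ?thesis by (simp only: of_real_eq_iff)
qed

lemma norm_cinner_le: "cmod (cinner x y) \<le> norm x * norm (y::'a::complex_inner)"
proof (cases "x = 0")
  case False
  hence nx: "norm x > 0" by simp
  define c where "c = cinner x y / cinner x x"
  define z where "z = y - scaleC c x"
  have "cinner x z = 0"
    using nx by (simp add: z_def cinner_diff_right cinner_scaleC_right c_def cinner_self)
  hence "(norm y)\<^sup>2 = (norm (scaleC c x))\<^sup>2 + (norm z)\<^sup>2"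
    using pythagoras_cinner[of "scaleC c x" z] by (simp add: z_def cinner_scaleC_left)
  hence "cmod c * norm x \<le> norm y"
    by (metis norm_scaleC le_add_same_cancel1 norm_ge_zero power2_le_iff_abs_le
        zero_le_power2 abs_norm_cancel)
  moreover have "cmod c = cmod (cinner x y) / (norm x)\<^sup>2"
    by (simp add: c_def cinner_self norm_divide norm_power)
  ultimately show ?thesis
    using nx by (simp add: power2_eq_square field_simps)
qed simp

lemma bounded_linear_cinner_right: "bounded_linear (cinner (x::'a::complex_inner))"
  using norm_cinner_le[of x]
  by (intro bounded_linear_intro[where K="norm x"])
    (auto simp: cinner_add_right cinner_scaleR_right scaleR_conv_of_real mult.commute)

lemma bounded_linear_scaleC: "bounded_linear (scaleC c :: 'a::complex_inner \<Rightarrow> 'a)"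
  by (rule bounded_linear_intro[where K="cmod c"])
    (simp_all add: scaleC_add_right scaleC_scaleR norm_scaleC mult.commute)


section \<open>Orthonormal families\<close>

definition orthonormal_on :: "'i set \<Rightarrow> ('i \<Rightarrow> 'a::complex_inner) \<Rightarrow> bool" where
  "orthonormal_on D v \<longleftrightarrow> (\<forall>p\<in>D. \<forall>q\<in>D. cinner (v p) (v q) = (if p = q then 1 else 0))"

lemma orthonormal_onD:
  "orthonormal_on D v \<Longrightarrow> p \<in> D \<Longrightarrow> q \<in> D \<Longrightarrow> cinner (v p) (v q) = (if p = q then 1 else 0)"
  by (simp add: orthonormal_on_def)

lemma norm_orthonormal_on: "orthonormal_on D v \<Longrightarrow> p \<in> D \<Longrightarrow> norm (v p) = 1"
  using norm_eq_sqrt_cinner[of "v p"] by (simp add: orthonormal_onD)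

lemma cnj_mult_self: "cnj z * z = complex_of_real ((cmod z)\<^sup>2)"
  by (subst complex_norm_square) (rule mult.commute)

lemma cinner_orthonormal_sum:
  assumes "orthonormal_on D v" "finite F" "F \<subseteq> D" "q \<in> D"
  shows "cinner (v q) (\<Sum>p\<in>F. scaleC (a p) (v p)) = (if q \<in> F then a q else 0)"
proof -
  have "cinner (v q) (\<Sum>p\<in>F. scaleC (a p) (v p)) = (\<Sum>p\<in>F. a p * cinner (v q) (v p))"
    by (simp add: cinner_sum_right cinner_scaleC_right)
  also have "\<dots> = (\<Sum>p\<in>F. if q = p then a p else 0)"
    using assms by (intro sum.cong) (auto simp: orthonormal_onD)
  finally show ?thesis using assms(2) by simp
qed

lemma norm_orthonormal_sum_square:
  assumes "orthonormal_on D v" "finite F" "F \<subseteq> D"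
  shows "(norm (\<Sum>p\<in>F. scaleC (a p) (v p)))\<^sup>2 = (\<Sum>p\<in>F. (cmod (a p))\<^sup>2)"
proof -
  define s where "s = (\<Sum>p\<in>F. scaleC (a p) (v p))"
  have "cinner s s = (\<Sum>p\<in>F. cnj (a p) * cinner (v p) s)"
    by (simp add: s_def cinner_sum_left cinner_scaleC_left)
  also have "\<dots> = (\<Sum>p\<in>F. complex_of_real ((cmod (a p))\<^sup>2))"
    using assms cinner_orthonormal_sum[OF assms, of _ a]
    by (intro sum.cong) (auto simp: s_def cnj_mult_self)
  finally have "complex_of_real ((norm s)\<^sup>2) = complex_of_real (\<Sum>p\<in>F. (cmod (a p))\<^sup>2)"
    by (simp add: cinner_self)
  thus ?thesis by (simp only: of_real_eq_iff s_def)
qed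

lemma bessel_inequality_finite:
  assumes "orthonormal_on D v" "finite F" "F \<subseteq> D"
  shows "(\<Sum>p\<in>F. (cmod (cinner (v p) x))\<^sup>2) \<le> (norm x)\<^sup>2"
proof -
  define s where "s = (\<Sum>p\<in>F. scaleC (cinner (v p) x) (v p))"
  have ns: "(norm s)\<^sup>2 = (\<Sum>p\<in>F. (cmod (cinner (v p) x))\<^sup>2)"
    unfolding s_def by (rule norm_orthonormal_sum_square[OF assms])
  have "cinner s x = (\<Sum>p\<in>F. cnj (cinner (v p) x) * cinner (v p) x)"
    by (simp add: s_def cinner_sum_left cinner_scaleC_left)
  also have "\<dots> = cinner s s"
    by (simp add: cinner_self ns cnj_mult_self)
  finally have "cinner s (x - s) = 0"
    by (metis cinner_diff_right cinner_eq_zero_sym diff_self)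
  hence "(norm x)\<^sup>2 = (norm s)\<^sup>2 + (norm (x - s))\<^sup>2"
    using pythagoras_cinner[of s "x - s"] by simp
  thus ?thesis using ns by simp
qed

lemma summable_on_tail_small:
  fixes w :: "'i \<Rightarrow> real"
  assumes "w summable_on A" "\<And>p. p \<in> A \<Longrightarrow> 0 \<le> w p" "e > 0"
  obtains F where "finite F" "F \<subseteq> A" "\<And>H. finite H \<Longrightarrow> H \<subseteq> A - F \<Longrightarrow> sum w H \<le> e"
proof -
  obtain F where F: "finite F" "F \<subseteq> A" "dist (sum w F) (infsum w A) \<le> e"
    using infsum_finite_approximation[OF assms(1,3)] by blast
  have "infsum w (A - F) = infsum w A - sum w F"
    using F assms(1) by (simp add: infsum_Diff)
  hence tail: "infsum w (A - F) \<le> e"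
    using F(3) by (simp add: dist_real_def)
  have "sum w H \<le> e" if "finite H" "H \<subseteq> A - F" for H
  proof -
    have "w summable_on (A - F)"
      using assms(1) F by (intro summable_on_Diff) auto
    hence "sum w H \<le> infsum w (A - F)"
      using that assms(2) by (intro finite_sum_le_infsum) auto
    thus ?thesis using tail by simp
  qed
  thus ?thesis using F that by blast
qed

lemma summable_on_if_sums_square_dominated:
  fixes f :: "'i \<Rightarrow> 'a::{real_normed_vector, complete_space}" and w :: "'i \<Rightarrow> real"
  assumes "w summable_on A" "\<And>p. p \<in> A \<Longrightarrow> 0 \<le> w p"
    and dom: "\<And>H. finite H \<Longrightarrow> H \<subseteq> A \<Longrightarrow> (norm (sum f H))\<^sup>2 \<le> sum w H"
  shows "f summable_on A"
proof -
  have "\<exists>P. eventually P (finite_subsets_at_top A) \<and>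
          (\<forall>F1 F2. P F1 \<and> P F2 \<longrightarrow> dist (sum f F1) (sum f F2) < e)" if "e > 0" for e
  proof -
    obtain F0 where F0: "finite F0" "F0 \<subseteq> A"
      and tail: "\<And>H. finite H \<Longrightarrow> H \<subseteq> A - F0 \<Longrightarrow> sum w H \<le> (e/3)\<^sup>2"
      using summable_on_tail_small[OF assms(1,2), of "(e/3)\<^sup>2"] \<open>e > 0\<close> by auto
    define P where "P F \<longleftrightarrow> finite F \<and> F0 \<subseteq> F \<and> F \<subseteq> A" for F
    have small: "norm (sum f F - sum f F0) < e/2" if "P F" for F
    proof -
      have "sum f F - sum f F0 = sum f (F - F0)"
        using that by (simp add: P_def sum_diff)
      moreover have "(norm (sum f (F - F0)))\<^sup>2 \<le> (e/3)\<^sup>2"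
        using that dom[of "F - F0"] tail[of "F - F0"] by (force simp: P_def)
      ultimately have "norm (sum f F - sum f F0) \<le> e/3"
        using \<open>e > 0\<close> by (simp add: power2_le_iff_abs_le)
      thus ?thesis using \<open>e > 0\<close> by simp
    qed
    have "eventually P (finite_subsets_at_top A)"
      unfolding P_def eventually_finite_subsets_at_top using F0 by blast
    moreover have "dist (sum f F1) (sum f F2) < e" if "P F1" "P F2" for F1 F2
      using small[OF that(1)] small[OF that(2)] norm_triangle_ineq4[of "sum f F1 - sum f F0" "sum f F2 - sum f F0"]
      by (simp add: dist_norm)
    ultimately show ?thesis by blast
  qed
  hence "cauchy_filter (filtermap (sum f) (finite_subsets_at_top A))"
    by (simp add: cauchy_filter_metric_filtermap)
  moreover have "complete (UNIV::'a set)"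
    by (meson Cauchy_convergent UNIV_I complete_def convergent_def)
  ultimately obtain L where "(sum f \<longlongrightarrow> L) (finite_subsets_at_top A)"
    using complete_uniform[where S=UNIV] by (force simp add: filterlim_def)
  thus ?thesis unfolding summable_on_def has_sum_def by blast
qed

lemma orthonormal_sum_summable:
  fixes v :: "'i \<Rightarrow> 'a::{complex_inner, complete_space}"
  assumes "orthonormal_on D v" "(\<lambda>p. (cmod (a p))\<^sup>2) summable_on D"
  shows "(\<lambda>p. scaleC (a p) (v p)) summable_on D"
  by (rule summable_on_if_sums_square_dominated[OF assms(2)])
    (auto simp: norm_orthonormal_sum_square[OF assms(1)])

lemma norm_orthonormal_infsum_square_le:
  fixes v :: "'i \<Rightarrow> 'a::{complex_inner, complete_space}"
  assumes "orthonormal_on D v" "(\<lambda>p. (cmod (a p))\<^sup>2) summable_on D"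
  shows "(norm (\<Sum>\<^sub>\<infinity>p\<in>D. scaleC (a p) (v p)))\<^sup>2 \<le> (\<Sum>\<^sub>\<infinity>p\<in>D. (cmod (a p))\<^sup>2)"
proof (rule tendsto_upperbound)
  show "((\<lambda>H. (norm (\<Sum>p\<in>H. scaleC (a p) (v p)))\<^sup>2) \<longlongrightarrow> (norm (\<Sum>\<^sub>\<infinity>p\<in>D. scaleC (a p) (v p)))\<^sup>2)
          (finite_subsets_at_top D)"
    using has_sum_infsum[OF orthonormal_sum_summable[OF assms]]
    by (intro tendsto_intros) (simp add: has_sum_def)
  show "\<forall>\<^sub>F H in finite_subsets_at_top D. (norm (\<Sum>p\<in>H. scaleC (a p) (v p)))\<^sup>2 \<le> (\<Sum>\<^sub>\<infinity>p\<in>D. (cmod (a p))\<^sup>2)"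
    using assms
    by (intro eventually_finite_subsets_at_top_weakI)
      (auto simp: norm_orthonormal_sum_square intro!: finite_sum_le_infsum)
qed simp

lemma cinner_orthonormal_infsum:
  fixes v :: "'i \<Rightarrow> 'a::{complex_inner, complete_space}"
  assumes "orthonormal_on D v" "(\<lambda>p. (cmod (a p))\<^sup>2) summable_on D" "q \<in> D"
  shows "cinner (v q) (\<Sum>\<^sub>\<infinity>p\<in>D. scaleC (a p) (v p)) = a q"
proof -
  have "((\<lambda>p. cinner (v q) (scaleC (a p) (v p))) has_sum cinner (v q) (\<Sum>\<^sub>\<infinity>p\<in>D. scaleC (a p) (v p))) D"
    using orthonormal_sum_summable[OF assms(1,2)]
    by (intro has_sum_bounded_linear[OF bounded_linear_cinner_right]) simp
  moreover have "((\<lambda>p. cinner (v q) (scaleC (a p) (v p))) has_sum a q) D"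
    using assms by (intro has_sum_finite_neutralI[where B="{q}"]) (auto simp: cinner_scaleC_right orthonormal_onD)
  ultimately show ?thesis by (rule has_sum_unique)
qed

lemma bessel_inequality:
  assumes "orthonormal_on D v"
  shows bessel_summable: "(\<lambda>p. (cmod (cinner (v p) x))\<^sup>2) summable_on D"
    and bessel_infsum_le: "(\<Sum>\<^sub>\<infinity>p\<in>D. (cmod (cinner (v p) x))\<^sup>2) \<le> (norm x)\<^sup>2"
proof -
  show s: "(\<lambda>p. (cmod (cinner (v p) x))\<^sup>2) summable_on D"
    by (rule nonneg_bdd_above_summable_on)
      (auto intro!: bdd_aboveI[where M="(norm x)\<^sup>2"] bessel_inequality_finite[OF assms])
  show "(\<Sum>\<^sub>\<infinity>p\<in>D. (cmod (cinner (v p) x))\<^sup>2) \<le> (norm x)\<^sup>2"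
    by (rule infsum_le_finite_sums[OF s]) (rule bessel_inequality_finite[OF assms])
qed


section \<open>Maximal orthonormal families\<close>

lemma orthonormal_expansion_has_sum:
  fixes v :: "'i \<Rightarrow> 'a::{complex_inner, complete_space}"
  assumes ov: "orthonormal_on D v" and complete: "\<And>y. (\<forall>q\<in>D. cinner (v q) y = 0) \<Longrightarrow> y = 0"
  shows "((\<lambda>p. scaleC (cinner (v p) x) (v p)) has_sum x) D"
proof -
  define S where "S = (\<Sum>\<^sub>\<infinity>p\<in>D. scaleC (cinner (v p) x) (v p))"
  have "\<forall>q\<in>D. cinner (v q) (x - S) = 0"
    using cinner_orthonormal_infsum[OF ov bessel_summable[OF ov]] by (simp add: S_def cinner_diff_right)
  hence "x = S" using complete by fastforce
  moreover have "((\<lambda>p. scaleC (cinner (v p) x) (v p)) has_sum S) D"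
    unfolding S_def by (rule has_sum_infsum[OF orthonormal_sum_summable[OF ov bessel_summable[OF ov]]])
  ultimately show ?thesis by simp
qed

lemma Rats_complex_dense:
  assumes "d > 0"
  obtains r where "Re r \<in> \<rat>" "Im r \<in> \<rat>" "cmod (r - z) < d"
proof -
  obtain a where a: "a \<in> \<rat>" "Re z - d/2 < a" "a < Re z"
    using Rats_dense_in_real[of "Re z - d/2" "Re z"] assms by auto
  obtain b where b: "b \<in> \<rat>" "Im z - d/2 < b" "b < Im z"
    using Rats_dense_in_real[of "Im z - d/2" "Im z"] assms by auto
  have "cmod (Complex a b - z) \<le> \<bar>Re (Complex a b - z)\<bar> + \<bar>Im (Complex a b - z)\<bar>"
    by (rule cmod_le)
  also have "\<dots> < d" using a b by simp
  finally show ?thesis using a b that[of "Complex a b"] by simp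
qed

lemma norm_orthonormal_sum_le:
  assumes "orthonormal_on D v" "F \<subseteq> D"
  shows "norm (\<Sum>p\<in>F. scaleC (a p) (v p)) \<le> (\<Sum>p\<in>F. cmod (a p))"
  using norm_sum[of "\<lambda>p. scaleC (a p) (v p)" F] assms
  by (simp add: norm_scaleC norm_orthonormal_on subset_iff cong: sum.cong)

lemma orthonormal_sum_rational_approx:
  assumes "orthonormal_on D v" "finite F" "F \<subseteq> D" "e > 0"
  obtains r where "\<And>p. Re (r p) \<in> \<rat> \<and> Im (r p) \<in> \<rat>"
    "dist (\<Sum>p\<in>F. scaleC (r p) (v p)) (\<Sum>p\<in>F. scaleC (a p) (v p)) < e"
proof -
  define d where "d = e / (real (card F) + 1)"
  have "d > 0" using assms(4) by (simp add: d_def)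
  have "\<exists>z. Re z \<in> \<rat> \<and> Im z \<in> \<rat> \<and> cmod (z - a p) < d" for p
    using Rats_complex_dense[OF \<open>d > 0\<close>, of "a p"] by blast
  then obtain r where r: "\<And>p. Re (r p) \<in> \<rat> \<and> Im (r p) \<in> \<rat> \<and> cmod (r p - a p) < d" by metis
  have "dist (\<Sum>p\<in>F. scaleC (r p) (v p)) (\<Sum>p\<in>F. scaleC (a p) (v p)) = norm (\<Sum>p\<in>F. scaleC (r p - a p) (v p))"
    by (simp add: dist_norm sum_subtractf scaleC_diff_left)
  also have "\<dots> \<le> (\<Sum>p\<in>F. cmod (r p - a p))"
    by (rule norm_orthonormal_sum_le[OF assms(1,3)])
  also have "\<dots> \<le> real (card F) * d"
    using sum_mono[of F "\<lambda>p. cmod (r p - a p)" "\<lambda>_. d"] r by (simp add: less_imp_le)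
  also have "\<dots> < e" using assms(4) by (simp add: d_def field_simps)
  finally show ?thesis using r that by blast
qed

text \<open>The finite combinations of the v_p with coefficients in \<rat> + i\<rat> form a countable dense set.\<close>
lemma separable_if_countable_orthonormal_expansion:
  fixes v :: "'i \<Rightarrow> 'a::{complex_inner, complete_space}"
  assumes ov: "orthonormal_on D v" and "countable D"
    and expansion: "\<And>x. ((\<lambda>p. scaleC (cinner (v p) x) (v p)) has_sum x) D"
  shows "separable_space (euclidean :: 'a topology)"
proof -
  define Qc where "Qc = {z::complex. Re z \<in> \<rat> \<and> Im z \<in> \<rat>}"
  have "Qc = (\<lambda>(a,b). Complex a b) ` (\<rat> \<times> \<rat>)"
    by (auto simp: Qc_def image_iff) (metis complex.collapse)
  hence "countable Qc" by (simp add: countable_rat)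
  define C where "C = (\<Union>F\<in>{F. finite F \<and> F \<subseteq> D}. (\<lambda>r. \<Sum>p\<in>F. scaleC (r p) (v p)) ` (PiE F (\<lambda>_. Qc)))"
  have countable: "countable C"
    unfolding C_def using \<open>countable Qc\<close> \<open>countable D\<close>
    by (intro countable_UN countable_Collect_finite_subset countable_image countable_PiE) auto
  have dense: "x \<in> closure C" for x
  proof (unfold closure_approachable, intro allI impI)
    fix e :: real assume e: "e > 0"
    have "(sum (\<lambda>p. scaleC (cinner (v p) x) (v p)) \<longlongrightarrow> x) (finite_subsets_at_top D)"
      using expansion[of x] by (simp add: has_sum_def)
    hence "\<forall>\<^sub>F F in finite_subsets_at_top D. dist (\<Sum>p\<in>F. scaleC (cinner (v p) x) (v p)) x < e/2"
      using tendstoD[of _ x _ "e/2"] e by simp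
    then obtain F where F: "finite F" "F \<subseteq> D" "dist (\<Sum>p\<in>F. scaleC (cinner (v p) x) (v p)) x < e/2"
      by (auto simp: eventually_finite_subsets_at_top)
    obtain r where r: "\<And>p. r p \<in> Qc"
      and close: "dist (\<Sum>p\<in>F. scaleC (r p) (v p)) (\<Sum>p\<in>F. scaleC (cinner (v p) x) (v p)) < e/2"
      using orthonormal_sum_rational_approx[OF ov F(1,2), of "e/2" "\<lambda>p. cinner (v p) x"] e
      unfolding Qc_def by auto
    have "(\<Sum>p\<in>F. scaleC (r p) (v p)) = (\<Sum>p\<in>F. scaleC (restrict r F p) (v p))" by simp
    moreover have "restrict r F \<in> PiE F (\<lambda>_. Qc)" using r by auto
    ultimately have "(\<Sum>p\<in>F. scaleC (r p) (v p)) \<in> C" unfolding C_def using F by blast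
    moreover have "dist (\<Sum>p\<in>F. scaleC (r p) (v p)) x < e"
      using close F(3) dist_triangle_half_l[of _ _ e x] by (metis dist_commute)
    ultimately show "\<exists>y\<in>C. dist y x < e" by blast
  qed
  show ?thesis
    unfolding separable_space_def by (intro exI[of _ C]) (use countable dense in auto)
qed

lemma orthonormal_on_Union_chain:
  assumes chain: "C \<in> chains {B::'a::complex_inner set. orthonormal_on B id}"
  shows "orthonormal_on (\<Union>C) id"
proof -
  have common: "\<exists>M\<in>C. b \<in> M \<and> c \<in> M" if bc: "b \<in> \<Union>C" "c \<in> \<Union>C" for b c
  proof -
    obtain M1 M2 where "M1 \<in> C" "M2 \<in> C" "b \<in> M1" "c \<in> M2" using bc by blast
    thus ?thesis using chainsD[OF chain, of M1 M2] by blast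
  qed
  show ?thesis unfolding orthonormal_on_def
  proof (intro ballI)
    fix b c assume "b \<in> \<Union>C" "c \<in> \<Union>C"
    then obtain M where "M \<in> C" "b \<in> M" "c \<in> M" using common by blast
    moreover have "orthonormal_on M id" using \<open>M \<in> C\<close> chain by (auto simp: chains_def)
    ultimately show "cinner (id b) (id c) = (if b = c then 1 else 0)" by (simp add: orthonormal_on_def)
  qed
qed

lemma exists_complete_orthonormal_set:
  "\<exists>B::'a::complex_inner set. orthonormal_on B id \<and> (\<forall>y. (\<forall>b\<in>B. cinner b y = 0) \<longrightarrow> y = 0)"
proof -
  let ?A = "{B::'a set. orthonormal_on B id}"
  have "\<Union>C \<in> ?A" if "C \<in> chains ?A" for C
    using orthonormal_on_Union_chain[OF that] by simp
  hence "\<exists>M\<in>?A. \<forall>X\<in>?A. M \<subseteq> X \<longrightarrow> X = M" by (intro Zorn_Lemma ballI)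
  then obtain B :: "'a set" where B: "orthonormal_on B id"
    and maximal: "\<And>B'. orthonormal_on B' id \<Longrightarrow> B \<subseteq> B' \<Longrightarrow> B' = B"
    by blast
  have "y = 0" if orth: "\<forall>b\<in>B. cinner b y = 0" for y
  proof (rule ccontr)
    assume "y \<noteq> 0"
    define u where "u = scaleC (complex_of_real (1 / norm y)) y"
    have "cinner u u = cnj (complex_of_real (1 / norm y)) * complex_of_real (1 / norm y) * cinner y y"
      by (simp add: u_def cinner_scaleC_left cinner_scaleC_right)
    also have "\<dots> = complex_of_real ((1 / norm y) * (1 / norm y) * (norm y)\<^sup>2)"
      by (simp add: cinner_self)
    also have "(1 / norm y) * (1 / norm y) * (norm y)\<^sup>2 = 1"
      using \<open>y \<noteq> 0\<close> by (simp add: power2_eq_square)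
    finally have "cinner u u = 1" by simp
    moreover have "cinner b u = 0" "cinner u b = 0" if "b \<in> B" for b
      using orth that cinner_eq_zero_sym[of b y] by (simp_all add: u_def cinner_scaleC_left cinner_scaleC_right)
    ultimately have "orthonormal_on (insert u B) id"
      using B by (auto simp: orthonormal_on_def)
    hence "u \<in> B" using maximal[of "insert u B"] by blast
    have "cinner u u = cinner u (scaleC (complex_of_real (1 / norm y)) y)" by (simp only: u_def)
    also have "\<dots> = complex_of_real (1 / norm y) * cinner u y" by (rule cinner_scaleC_right)
    also have "cinner u y = 0" using orth \<open>u \<in> B\<close> by blast
    finally show False using \<open>cinner u u = 1\<close> by simp
  qed
  thus ?thesis using B by blast
qed

lemma uncountable_UNIV_nat_bool: "uncountable (UNIV :: (nat \<Rightarrow> bool) set)"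
proof
  assume "countable (UNIV :: (nat \<Rightarrow> bool) set)"
  hence "range (from_nat_into (UNIV :: (nat \<Rightarrow> bool) set)) = UNIV" by simp
  then obtain n where "from_nat_into UNIV n = (\<lambda>k. \<not> from_nat_into (UNIV :: (nat \<Rightarrow> bool) set) k k)"
    by (metis UNIV_I imageE)
  hence "from_nat_into (UNIV :: (nat \<Rightarrow> bool) set) n n = (\<not> from_nat_into (UNIV :: (nat \<Rightarrow> bool) set) n n)"
    by metis
  thus False by simp
qed

lemma inj_on_either_way: "(\<exists>f. inj_on f A \<and> f ` A \<subseteq> B) \<or> (\<exists>g. inj_on g B \<and> g ` B \<subseteq> A)"
  using ordLeq_total[OF card_of_Well_order card_of_Well_order, of A B]
  by (simp only: card_of_ordLeq[symmetric])

text \<open>Indexing by a subset of Cantor space is what later lets distinct members of the family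
receive almost disjoint sets of prefix codes.  A complete orthonormal set can have any cardinality,
so comparability of cardinals supplies an injection in one direction or the other.\<close>
lemma uncountable_orthonormal_family:
  assumes "\<not> separable_space (euclidean :: ('a::{complex_inner, complete_space}) topology)"
  shows "\<exists>(D :: (nat \<Rightarrow> bool) set) (v :: (nat \<Rightarrow> bool) \<Rightarrow> 'a). orthonormal_on D v \<and> uncountable D"
proof -
  obtain B :: "'a set" where B: "orthonormal_on B id" and complete: "\<forall>y. (\<forall>b\<in>B. cinner b y = 0) \<longrightarrow> y = 0"
    using exists_complete_orthonormal_set by blast
  have expansion: "((\<lambda>b. scaleC (cinner (id b) x) (id b)) has_sum x) B" for x
    using complete by (intro orthonormal_expansion_has_sum[OF B]) auto
  have "uncountable B"
  proof
    assume "countable B"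
    from separable_if_countable_orthonormal_expansion[OF B this expansion] assms show False by simp
  qed
  consider f :: "'a \<Rightarrow> nat \<Rightarrow> bool" where "inj_on f B"
    | g :: "(nat \<Rightarrow> bool) \<Rightarrow> 'a" where "inj g" "range g \<subseteq> B"
    using inj_on_either_way[of B "UNIV :: (nat \<Rightarrow> bool) set"] by blast
  thus ?thesis
  proof cases
    case 1
    have "orthonormal_on (f ` B) (inv_into B f)"
      using B 1(1) by (auto simp: orthonormal_on_def dest: inj_onD)
    moreover have "uncountable (f ` B)"
      using \<open>uncountable B\<close> 1(1) countable_image_inj_on by blast
    ultimately show ?thesis by blast
  next
    case 2
    have "orthonormal_on UNIV g"
      using B 2 by (auto simp: orthonormal_on_def inj_eq subset_iff)
    thus ?thesis using uncountable_UNIV_nat_bool by blast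
  qed
qed


section \<open>Diagonal operators\<close>

lemma infsum_mult_le_if_sums_le:
  fixes g w :: "'i \<Rightarrow> real"
  assumes "(\<lambda>p. g p * w p) summable_on A" "\<And>p. p \<in> A \<Longrightarrow> 0 \<le> w p" "\<And>p. p \<in> A \<Longrightarrow> g p \<le> M"
    and "\<And>H. finite H \<Longrightarrow> H \<subseteq> A \<Longrightarrow> sum w H \<le> \<delta>" "0 \<le> M"
  shows "(\<Sum>\<^sub>\<infinity>p\<in>A. g p * w p) \<le> M * \<delta>"
proof (rule infsum_le_finite_sums[OF assms(1)])
  fix H assume H: "finite H" "H \<subseteq> A"
  have "(\<Sum>p\<in>H. g p * w p) \<le> (\<Sum>p\<in>H. M * w p)"
    using H assms(2,3) by (intro sum_mono mult_right_mono) auto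
  also have "\<dots> = M * sum w H" by (simp add: sum_distrib_left)
  also have "\<dots> \<le> M * \<delta>" using assms(4)[OF H] assms(5) by (rule mult_left_mono)
  finally show "(\<Sum>p\<in>H. g p * w p) \<le> M * \<delta>" .
qed

lemma tendsto_infsum_dominated:
  fixes w :: "'i \<Rightarrow> real" and h :: "nat \<Rightarrow> 'i \<Rightarrow> real"
  assumes w: "w summable_on D" "\<And>p. p \<in> D \<Longrightarrow> 0 \<le> w p"
    and h_bounded: "\<And>n p. p \<in> D \<Longrightarrow> 0 \<le> h n p \<and> h n p \<le> M"
    and h_lim: "\<And>p. p \<in> D \<Longrightarrow> w p \<noteq> 0 \<Longrightarrow> (\<lambda>n. h n p) \<longlonglongrightarrow> 0"
  shows "(\<lambda>n. \<Sum>\<^sub>\<infinity>p\<in>D. h n p * w p) \<longlonglongrightarrow> 0"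
proof (rule tendstoI)
  fix e :: real assume "e > 0"
  define \<delta> where "\<delta> = e / (2 * (\<bar>M\<bar> + 1))"
  have "\<delta> > 0" using \<open>e > 0\<close> by (simp add: \<delta>_def)
  obtain F where F: "finite F" "F \<subseteq> D" and tail: "\<And>H. finite H \<Longrightarrow> H \<subseteq> D - F \<Longrightarrow> sum w H \<le> \<delta>"
    using summable_on_tail_small[OF w \<open>\<delta> > 0\<close>] by blast
  have "(\<lambda>n. h n p * w p) \<longlonglongrightarrow> 0" if "p \<in> F" for p
  proof (cases "w p = 0")
    case False
    thus ?thesis using F that h_lim by (auto intro: tendsto_mult_left_zero)
  qed simp
  hence "(\<lambda>n. \<Sum>p\<in>F. h n p * w p) \<longlonglongrightarrow> 0" by (rule tendsto_null_sum)
  from order_tendstoD(2)[OF this, of "e/2"]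
  have "\<forall>\<^sub>F n in sequentially. (\<Sum>p\<in>F. h n p * w p) < e/2" using \<open>e > 0\<close> by simp
  thus "\<forall>\<^sub>F n in sequentially. dist (\<Sum>\<^sub>\<infinity>p\<in>D. h n p * w p) 0 < e"
  proof eventually_elim
    case (elim n)
    have summable: "(\<lambda>p. h n p * w p) summable_on D"
      using w h_bounded
      by (intro summable_on_comparison_test[OF summable_on_cmult_right[OF w(1), of M]])
        (auto intro: mult_right_mono)
    have "(\<Sum>\<^sub>\<infinity>p\<in>D - F. h n p * w p) = (\<Sum>\<^sub>\<infinity>p\<in>D. h n p * w p) - (\<Sum>p\<in>F. h n p * w p)"
      using summable F by (simp add: infsum_Diff)
    moreover have "(\<Sum>\<^sub>\<infinity>p\<in>D - F. h n p * w p) \<le> \<bar>M\<bar> * \<delta>"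
    proof (rule infsum_mult_le_if_sums_le)
      show "(\<lambda>p. h n p * w p) summable_on D - F" using summable by (rule summable_on_subset) auto
      show "h n p \<le> \<bar>M\<bar>" if "p \<in> D - F" for p
        using h_bounded[of p n] that by (auto intro: order_trans[OF _ abs_ge_self])
    qed (use w(2) tail in auto)
    moreover have "\<bar>M\<bar> * \<delta> < e/2"
      using \<open>e > 0\<close> by (simp add: \<delta>_def field_simps)
    ultimately have "(\<Sum>\<^sub>\<infinity>p\<in>D. h n p * w p) < e" using elim by linarith
    moreover have "0 \<le> (\<Sum>\<^sub>\<infinity>p\<in>D. h n p * w p)"
      using w(2) h_bounded by (intro infsum_nonneg) auto
    ultimately show ?case by (simp add: dist_real_def)
  qed
qed

text \<open>This vanishes on the orthogonal complement of the family, which need not be complete.\<close>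
definition diagonal_op :: "'i set \<Rightarrow> ('i \<Rightarrow> 'a::complex_inner) \<Rightarrow> ('i \<Rightarrow> complex) \<Rightarrow> 'a \<Rightarrow> 'a" where
  "diagonal_op D v \<mu> x = (\<Sum>\<^sub>\<infinity>p\<in>D. scaleC (\<mu> p * cinner (v p) x) (v p))"

context
  fixes D :: "'i set" and v :: "'i \<Rightarrow> 'a::{complex_inner, complete_space}" and \<mu> :: "'i \<Rightarrow> complex"
    and B :: real
  assumes ov: "orthonormal_on D v" and \<mu>_bounded: "\<And>p. cmod (\<mu> p) \<le> B"
begin

lemma diagonal_coef_square_le: "(cmod (\<mu> p * cinner (v p) x))\<^sup>2 \<le> B\<^sup>2 * (cmod (cinner (v p) x))\<^sup>2"
  using power_mono[OF \<mu>_bounded[of p] norm_ge_zero]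
  by (simp add: norm_mult power_mult_distrib mult_right_mono)

lemma diagonal_coef_square_summable: "(\<lambda>p. (cmod (\<mu> p * cinner (v p) x))\<^sup>2) summable_on D"
  by (rule summable_on_comparison_test[OF summable_on_cmult_right[OF bessel_summable[OF ov], where c="B\<^sup>2"]])
    (auto intro: diagonal_coef_square_le)

lemma diagonal_op_summable: "(\<lambda>p. scaleC (\<mu> p * cinner (v p) x) (v p)) summable_on D"
  by (rule orthonormal_sum_summable[OF ov diagonal_coef_square_summable])

lemma cinner_diagonal_op: "q \<in> D \<Longrightarrow> cinner (v q) (diagonal_op D v \<mu> x) = \<mu> q * cinner (v q) x"
  unfolding diagonal_op_def by (rule cinner_orthonormal_infsum[OF ov diagonal_coef_square_summable])

lemma norm_diagonal_op_square_le:
  "(norm (diagonal_op D v \<mu> x))\<^sup>2 \<le> (\<Sum>\<^sub>\<infinity>p\<in>D. (cmod (\<mu> p * cinner (v p) x))\<^sup>2)"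
  unfolding diagonal_op_def by (rule norm_orthonormal_infsum_square_le[OF ov diagonal_coef_square_summable])

lemma norm_diagonal_op_le: "norm (diagonal_op D v \<mu> x) \<le> B * norm x"
proof -
  have "B \<ge> 0" using \<mu>_bounded[of undefined] norm_ge_zero order_trans by blast
  have "(norm (diagonal_op D v \<mu> x))\<^sup>2 \<le> (\<Sum>\<^sub>\<infinity>p\<in>D. B\<^sup>2 * (cmod (cinner (v p) x))\<^sup>2)"
    using norm_diagonal_op_square_le
    by (rule order_trans)
      (auto intro!: infsum_mono diagonal_coef_square_summable diagonal_coef_square_le
        summable_on_cmult_right bessel_summable[OF ov])
  also have "\<dots> = B\<^sup>2 * (\<Sum>\<^sub>\<infinity>p\<in>D. (cmod (cinner (v p) x))\<^sup>2)"
    by (rule infsum_cmult_right) (rule bessel_summable[OF ov])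
  also have "\<dots> \<le> (B * norm x)\<^sup>2"
    using bessel_infsum_le[OF ov] by (simp add: power_mult_distrib mult_left_mono)
  finally show ?thesis using \<open>B \<ge> 0\<close> by (simp add: power2_le_iff_abs_le)
qed

lemma diagonal_op_add: "diagonal_op D v \<mu> (x + y) = diagonal_op D v \<mu> x + diagonal_op D v \<mu> y"
  unfolding diagonal_op_def
  by (subst infsum_add[symmetric])
    (auto intro!: diagonal_op_summable infsum_cong simp: scaleC_add_left distrib_left cinner_add_right)

lemma diagonal_op_scaleC: "diagonal_op D v \<mu> (scaleC c x) = scaleC c (diagonal_op D v \<mu> x)"
proof -
  have "((\<lambda>p. scaleC c (scaleC (\<mu> p * cinner (v p) x) (v p))) has_sum scaleC c (diagonal_op D v \<mu> x)) D"
    unfolding diagonal_op_def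
    by (rule has_sum_bounded_linear[OF bounded_linear_scaleC has_sum_infsum[OF diagonal_op_summable]])
  moreover have "scaleC c (scaleC (\<mu> p * cinner (v p) x) (v p)) = scaleC (\<mu> p * cinner (v p) (scaleC c x)) (v p)" for p
    by (simp add: scaleC_scaleC cinner_scaleC_right mult_ac)
  ultimately have "((\<lambda>p. scaleC (\<mu> p * cinner (v p) (scaleC c x)) (v p)) has_sum scaleC c (diagonal_op D v \<mu> x)) D"
    by simp
  thus ?thesis unfolding diagonal_op_def by (rule infsumI)
qed

end

lemma diagonal_op_add_fun:
  fixes v :: "'i \<Rightarrow> 'a::{complex_inner, complete_space}"
  assumes ov: "orthonormal_on D v" and "\<And>p. cmod (\<mu> p) \<le> B" "\<And>p. cmod (\<nu> p) \<le> B'"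
  shows "diagonal_op D v \<mu> x + diagonal_op D v \<nu> x = diagonal_op D v (\<lambda>p. \<mu> p + \<nu> p) x"
  unfolding diagonal_op_def
  by (subst infsum_add[symmetric])
    (auto intro!: diagonal_op_summable[OF ov assms(2)] diagonal_op_summable[OF ov assms(3)] infsum_cong
      simp: scaleC_add_left distrib_right)

lemma diagonal_op_cong:
  "(\<And>p. p \<in> D \<Longrightarrow> \<mu> p * cinner (v p) y = \<nu> p * cinner (v p) x) \<Longrightarrow>
    diagonal_op D v \<mu> y = diagonal_op D v \<nu> x"
  unfolding diagonal_op_def by (rule infsum_cong) simp

lemma diagonal_op_zero: "diagonal_op D v (\<lambda>p. 0) x = 0"
  by (simp add: diagonal_op_def)


section \<open>Lacunary eigenvalues\<close>

definition lacunary_sum :: "nat set \<Rightarrow> real" where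
  "lacunary_sum A = (\<Sum>\<^sub>\<infinity>j\<in>A. (1/2)^(j\<^sup>2))"

definition lacunary_eigenvalue :: "nat set \<Rightarrow> complex" where
  "lacunary_eigenvalue A = cis (2 * pi * lacunary_sum A)"

lemma lacunary_summable: "(\<lambda>j. (1/2::real)^(j\<^sup>2)) summable_on A"
proof (rule nonneg_bdd_above_summable_on)
  show "bdd_above (sum (\<lambda>j. (1/2::real)^(j\<^sup>2)) ` {F. F \<subseteq> A \<and> finite F})"
  proof (rule bdd_aboveI[where M=2], clarify)
    fix F :: "nat set" assume "finite F"
    have "(\<Sum>j\<in>F. (1/2::real)^(j\<^sup>2)) \<le> (\<Sum>j\<in>F. (1/2)^j)"
      by (intro sum_mono power_decreasing) (auto simp: power2_eq_square)
    also have "\<dots> \<le> 2" using geometric_sum_less[of "1/2::real" F] \<open>finite F\<close> by simp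
    finally show "(\<Sum>j\<in>F. (1/2::real)^(j\<^sup>2)) \<le> 2" .
  qed
qed simp

text \<open>Since j^2 \<ge> (a+1)^2 + (j - (a+1)) for j > a, the tail is dominated by a geometric series.\<close>
lemma lacunary_tail_le: "(\<Sum>\<^sub>\<infinity>j\<in>A \<inter> {a<..}. (1/2::real)^(j\<^sup>2)) \<le> 2 * (1/2)^((a+1)\<^sup>2)"
proof (rule infsum_le_finite_sums[OF lacunary_summable])
  fix F assume F: "finite F" "F \<subseteq> A \<inter> {a<..}"
  have term_le: "(1/2::real)^(j\<^sup>2) \<le> (1/2)^((a+1)\<^sup>2) * (1/2)^(j - (a+1))" if "j \<in> F" for j
  proof -
    have "a + 1 \<le> j" using F that by auto
    then obtain d where j: "j = a + 1 + d" using le_Suc_ex by blast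
    have "(a+1)\<^sup>2 + d \<le> j\<^sup>2" unfolding j by (simp add: power2_eq_square algebra_simps)
    hence "(1/2::real)^(j\<^sup>2) \<le> (1/2)^((a+1)\<^sup>2 + d)" by (rule power_decreasing) auto
    thus ?thesis by (simp add: j power_add)
  qed
  have "inj_on (\<lambda>j. j - (a+1)) F"
  proof (rule inj_onI)
    fix x y assume "x \<in> F" "y \<in> F" "x - (a+1) = y - (a+1)"
    moreover have "a < x" "a < y" using F \<open>x \<in> F\<close> \<open>y \<in> F\<close> by auto
    ultimately show "x = y" by arith
  qed
  hence "(\<Sum>j\<in>F. (1/2::real)^(j - (a+1))) = (\<Sum>k\<in>(\<lambda>j. j - (a+1)) ` F. (1/2)^k)"
    by (simp add: sum.reindex)
  also have "\<dots> \<le> 2" using geometric_sum_less[of "1/2::real" "(\<lambda>j. j - (a+1)) ` F"] F by simp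
  finally have geometric: "(\<Sum>j\<in>F. (1/2::real)^(j - (a+1))) \<le> 2" .
  have "(\<Sum>j\<in>F. (1/2::real)^(j\<^sup>2)) \<le> (1/2)^((a+1)\<^sup>2) * (\<Sum>j\<in>F. (1/2)^(j - (a+1)))"
    unfolding sum_distrib_left by (rule sum_mono) (rule term_le)
  also have "\<dots> \<le> (1/2)^((a+1)\<^sup>2) * 2" using geometric by (rule mult_left_mono) simp
  finally show "(\<Sum>j\<in>F. (1/2::real)^(j\<^sup>2)) \<le> 2 * (1/2)^((a+1)\<^sup>2)" by (simp add: mult.commute)
qed

lemma lacunary_sum_split:
  "lacunary_sum A = (\<Sum>j\<in>A \<inter> {..<a}. (1/2)^(j\<^sup>2)) + (if a \<in> A then (1/2)^(a\<^sup>2) else 0)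
    + (\<Sum>\<^sub>\<infinity>j\<in>A \<inter> {a<..}. (1/2)^(j\<^sup>2))"
proof -
  let ?f = "\<lambda>j. (1/2::real)^(j\<^sup>2)"
  have "A = (A \<inter> {..<a}) \<union> ((A \<inter> {a}) \<union> (A \<inter> {a<..}))" by auto
  hence "lacunary_sum A = infsum ?f ((A \<inter> {..<a}) \<union> ((A \<inter> {a}) \<union> (A \<inter> {a<..})))"
    unfolding lacunary_sum_def by (simp only: flip: \<open>A = _\<close>)
  also have "\<dots> = infsum ?f (A \<inter> {..<a}) + infsum ?f ((A \<inter> {a}) \<union> (A \<inter> {a<..}))"
    by (rule infsum_Un_disjoint) (auto intro: lacunary_summable)
  also have "infsum ?f ((A \<inter> {a}) \<union> (A \<inter> {a<..})) = infsum ?f (A \<inter> {a}) + infsum ?f (A \<inter> {a<..})"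
    by (rule infsum_Un_disjoint) (auto intro: lacunary_summable)
  also have "infsum ?f (A \<inter> {a}) = (if a \<in> A then ?f a else 0)" by auto
  finally show ?thesis by (simp add: add.assoc)
qed

text \<open>The terms j < a of 2^K \<Sum>_{j \<in> A} 2^(-j^2) are integers, so only the term j = a and the
tail R survive in \<lambda>_A^(2^K).\<close>
lemma lacunary_eigenvalue_power_split:
  assumes small: "\<And>j. j < a \<Longrightarrow> j\<^sup>2 \<le> K"
  obtains R where
    "lacunary_eigenvalue A ^ 2^K = cis (2 * pi * (if a \<in> A then 2^K * (1/2)^(a\<^sup>2) else 0)) * cis (2 * pi * R)"
    "0 \<le> R" "R \<le> 2^K * (2 * (1/2)^((a+1)\<^sup>2))"
proof -
  let ?f = "\<lambda>j. (1/2::real)^(j\<^sup>2)"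
  define s where "s = (if a \<in> A then 2^K * (1/2)^(a\<^sup>2) else 0::real)"
  define I where "I = 2^K * (\<Sum>j\<in>A \<inter> {..<a}. ?f j)"
  define R where "R = 2^K * (\<Sum>\<^sub>\<infinity>j\<in>A \<inter> {a<..}. ?f j)"
  have "2^K * lacunary_sum A = I + (s + R)"
    by (simp add: lacunary_sum_split[of A a] I_def s_def R_def algebra_simps)
  have "I = (\<Sum>j\<in>A \<inter> {..<a}. 2^(K - j\<^sup>2))"
    unfolding I_def sum_distrib_left
  proof (rule sum.cong[OF refl])
    fix j assume "j \<in> A \<inter> {..<a}"
    hence "(2::real)^K = 2^(K - j\<^sup>2) * 2^(j\<^sup>2)" using small by (simp add: power_add[symmetric])
    thus "2^K * (1/2::real)^(j\<^sup>2) = 2^(K - j\<^sup>2)" by (simp add: power_one_over)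
  qed
  hence "I \<in> \<int>" by (simp add: Ints_sum)
  have "lacunary_eigenvalue A ^ 2^K = cis (real (2^K) * (2 * pi * lacunary_sum A))"
    unfolding lacunary_eigenvalue_def by (rule Complex.DeMoivre)
  also have "\<dots> = cis (2 * pi * (2^K * lacunary_sum A))" by (simp add: mult_ac)
  also have "\<dots> = cis (2 * pi * I) * (cis (2 * pi * s) * cis (2 * pi * R))"
    by (simp only: \<open>2^K * lacunary_sum A = I + (s + R)\<close> distrib_left cis_mult)
  also have "cis (2 * pi * I) = 1" using \<open>I \<in> \<int>\<close> by simp
  finally have "lacunary_eigenvalue A ^ 2^K = cis (2 * pi * s) * cis (2 * pi * R)" by simp
  moreover have "0 \<le> R" unfolding R_def by (intro mult_nonneg_nonneg infsum_nonneg) auto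
  moreover have "R \<le> 2^K * (2 * (1/2)^((a+1)\<^sup>2))"
    unfolding R_def by (rule mult_left_mono[OF lacunary_tail_le]) simp
  ultimately show ?thesis using that[of R] unfolding s_def by blast
qed

lemma lacunary_remainder_le:
  assumes "K \<le> a\<^sup>2"
  shows "(2::real)^K * (2 * (1/2)^((a+1)\<^sup>2)) \<le> (1/2)^a"
proof -
  have "(a+1)\<^sup>2 = a\<^sup>2 + 2*a + 1" by (simp add: power2_eq_square algebra_simps)
  hence "K + 1 + a \<le> (a+1)\<^sup>2" using assms by linarith
  hence le: "(2::real)^(K + 1 + a) \<le> 2^((a+1)\<^sup>2)" by (rule power_increasing) simp
  have "(2::real)^K * (2 * (1/2)^((a+1)\<^sup>2)) = 2^(K + 1 + a) / 2^((a+1)\<^sup>2) * (1/2)^a"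
    by (simp add: power_add power_one_over)
  also have "\<dots> \<le> 1 * (1/2)^a"
    using le by (intro mult_right_mono) (simp_all add: divide_le_eq_1)
  finally show ?thesis by simp
qed

lemma tendsto_lacunary_eigenvalue_power:
  assumes a: "filterlim a at_top sequentially"
    and small: "\<And>n j. j < a n \<Longrightarrow> j\<^sup>2 \<le> K n" and K: "\<And>n. K n \<le> (a n)\<^sup>2"
    and c: "\<forall>\<^sub>F n in sequentially. cis (2 * pi * (if a n \<in> A then 2^K n * (1/2)^((a n)\<^sup>2) else 0)) = c"
  shows "(\<lambda>n. lacunary_eigenvalue A ^ 2^K n) \<longlonglongrightarrow> c"
proof -
  have "\<exists>r. lacunary_eigenvalue A ^ 2^K n =
      cis (2 * pi * (if a n \<in> A then 2^K n * (1/2)^((a n)\<^sup>2) else 0)) * cis (2 * pi * r) \<and>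
      0 \<le> r \<and> r \<le> (1/2)^(a n)" for n
  proof -
    obtain r where "lacunary_eigenvalue A ^ 2^K n =
        cis (2 * pi * (if a n \<in> A then 2^K n * (1/2)^((a n)\<^sup>2) else 0)) * cis (2 * pi * r)"
      "0 \<le> r" "r \<le> 2^K n * (2 * (1/2)^((a n + 1)\<^sup>2))"
      using lacunary_eigenvalue_power_split[OF small[of _ n]] by blast
    thus ?thesis using lacunary_remainder_le[OF K[of n]] by (intro exI[of _ r]) auto
  qed
  then obtain R where R: "\<And>n. lacunary_eigenvalue A ^ 2^K n =
      cis (2 * pi * (if a n \<in> A then 2^K n * (1/2)^((a n)\<^sup>2) else 0)) * cis (2 * pi * R n)"
    and R_bounds: "\<And>n. 0 \<le> R n \<and> R n \<le> (1/2)^(a n)"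
    by metis
  have "(\<lambda>n. (1/2::real)^(a n)) \<longlonglongrightarrow> 0"
    using filterlim_compose[OF LIMSEQ_power_zero[of "1/2::real"] a] by simp
  have "R \<longlonglongrightarrow> 0"
    by (rule tendsto_sandwich[where f="\<lambda>_. 0" and h="\<lambda>n. (1/2::real)^(a n)"])
      (simp_all add: R_bounds \<open>(\<lambda>n. (1/2::real)^(a n)) \<longlonglongrightarrow> 0\<close>)
  hence "(\<lambda>n. c * cis (2 * pi * R n)) \<longlonglongrightarrow> c * cis (2 * pi * 0)"
    by (intro tendsto_intros)
  hence "(\<lambda>n. c * cis (2 * pi * R n)) \<longlonglongrightarrow> c" by simp
  moreover have "\<forall>\<^sub>F n in sequentially. c * cis (2 * pi * R n) = lacunary_eigenvalue A ^ 2^K n"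
    using c by eventually_elim (simp add: R)
  ultimately show ?thesis by (rule Lim_transform_eventually)
qed

lemma norm_lacunary_eigenvalue [simp]: "cmod (lacunary_eigenvalue A) = 1"
  by (simp add: lacunary_eigenvalue_def)


section \<open>Almost disjoint prefix codes\<close>

definition prefix_codes :: "(nat \<Rightarrow> bool) \<Rightarrow> nat set" where
  "prefix_codes f = range (\<lambda>n. to_nat (map f [0..<n]))"

lemma prefix_code_eqD:
  assumes "to_nat (map f [0..<n]) = to_nat (map g [0..<m])"
  shows "n = m" "\<And>j. j < n \<Longrightarrow> f j = g j"
proof -
  have eq: "map f [0..<n] = map g [0..<m]" using assms by simp
  hence "length (map f [0..<n]) = length (map g [0..<m])" by simp
  thus "n = m" by simp
  fix j assume "j < n"
  have "map f [0..<n] ! j = map g [0..<m] ! j" using eq by simp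
  thus "f j = g j" using \<open>j < n\<close> \<open>n = m\<close> by simp
qed

lemma infinite_prefix_codes: "infinite (prefix_codes f)"
  unfolding prefix_codes_def by (rule range_inj_infinite) (auto intro: injI prefix_code_eqD)

lemma finite_prefix_codes_Int:
  assumes "f \<noteq> g"
  shows "finite (prefix_codes f \<inter> prefix_codes g)"
proof -
  obtain i where i: "f i \<noteq> g i" using assms by blast
  have "prefix_codes f \<inter> prefix_codes g \<subseteq> (\<lambda>n. to_nat (map f [0..<n])) ` {..i}"
  proof
    fix x assume "x \<in> prefix_codes f \<inter> prefix_codes g"
    then obtain n m where x: "x = to_nat (map f [0..<n])" "x = to_nat (map g [0..<m])"
      unfolding prefix_codes_def by blast
    hence "n \<le> i" using prefix_code_eqD(2)[of f n g m i] i by (metis not_le)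
    thus "x \<in> (\<lambda>n. to_nat (map f [0..<n])) ` {..i}" using x by auto
  qed
  thus ?thesis by (rule finite_subset) simp
qed

text \<open>Skipping the least code makes every value positive, so that 2^(a^2 - 1) < 2^(a^2) below.\<close>
definition code_enum :: "(nat \<Rightarrow> bool) \<Rightarrow> nat \<Rightarrow> nat" where
  "code_enum g m = enumerate (prefix_codes g) (Suc m)"

lemma strict_mono_code_enum: "strict_mono (code_enum g)"
  unfolding strict_mono_def code_enum_def using infinite_prefix_codes by (simp add: enumerate_mono)

lemma code_enum_in: "code_enum g m \<in> prefix_codes g"
  unfolding code_enum_def using infinite_prefix_codes by (rule enumerate_in_set)

lemma code_enum_pos: "0 < code_enum g m"
proof -
  have "enumerate (prefix_codes g) 0 < enumerate (prefix_codes g) (Suc m)"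
    using infinite_prefix_codes by (simp add: enumerate_mono)
  thus ?thesis by (simp add: code_enum_def)
qed

lemma filterlim_code_enum: "filterlim (code_enum g) at_top sequentially"
  by (rule filterlim_subseq[OF strict_mono_code_enum])

lemma eventually_code_enum_notin:
  assumes "f \<noteq> g"
  shows "\<forall>\<^sub>F m in sequentially. code_enum g m \<notin> prefix_codes f"
proof -
  define N where "N = Max (prefix_codes f \<inter> prefix_codes g)"
  have "code_enum g m \<notin> prefix_codes f" if "m > N" for m
  proof
    assume "code_enum g m \<in> prefix_codes f"
    hence "code_enum g m \<le> N"
      using code_enum_in finite_prefix_codes_Int[OF assms] by (simp add: N_def)
    thus False using strict_mono_imp_increasing[OF strict_mono_code_enum[of g], of m] that by simp
  qed
  thus ?thesis by (auto simp: eventually_sequentially intro: exI[of _ "Suc N"])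
qed

definition rigidity_seq :: "nat \<Rightarrow> nat" where
  "rigidity_seq n = 2 ^ (Suc n)\<^sup>2"

definition test_seq :: "(nat \<Rightarrow> bool) \<Rightarrow> nat \<Rightarrow> nat" where
  "test_seq g n = 2 ^ ((code_enum g (n div 2))\<^sup>2 - (if even n then 1 else 0))"

lemma strict_mono_rigidity_seq: "strict_mono rigidity_seq"
  unfolding rigidity_seq_def
  by (rule strict_monoI_Suc) (rule power_strict_increasing, simp add: power2_eq_square, simp)

lemma strict_mono_test_seq: "strict_mono (test_seq g)"
proof (rule strict_monoI_Suc)
  fix n
  let ?a = "code_enum g (n div 2)" and ?b = "code_enum g (Suc (n div 2))"
  show "test_seq g n < test_seq g (Suc n)"
  proof (cases "even n")
    case True
    hence "Suc n div 2 = n div 2" by presburger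
    thus ?thesis using True code_enum_pos[of g "n div 2"] by (simp add: test_seq_def)
  next
    case False
    hence "Suc n div 2 = Suc (n div 2)" by presburger
    moreover have "?a + 1 \<le> ?b" using strict_mono_code_enum[of g] by (simp add: strict_mono_def Suc_le_eq)
    hence "?a\<^sup>2 + 2 \<le> ?b\<^sup>2"
      using power_mono[of "?a + 1" ?b 2] code_enum_pos[of g "n div 2"] by (simp add: power2_eq_square)
    ultimately show ?thesis using False by (simp add: test_seq_def)
  qed
qed

lemma two_power_mult_half_power [simp]: "(2::real)^n * (1/2)^n = 1"
  by (simp add: power_one_over)

lemma tendsto_lacunary_eigenvalue_rigidity_seq:
  "(\<lambda>n. lacunary_eigenvalue A ^ rigidity_seq n) \<longlonglongrightarrow> 1"
  unfolding rigidity_seq_def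
proof (rule tendsto_lacunary_eigenvalue_power[where a=Suc])
  show "filterlim Suc at_top sequentially" by (rule filterlim_subseq) (simp add: strict_mono_def)
  show "j\<^sup>2 \<le> (Suc n)\<^sup>2" if "j < Suc n" for j n using that by (simp add: power_mono)
qed auto

lemma tendsto_lacunary_eigenvalue_test_seq_odd:
  "(\<lambda>m. lacunary_eigenvalue A ^ test_seq g (Suc (2*m))) \<longlonglongrightarrow> 1"
proof -
  have "(\<lambda>m. lacunary_eigenvalue A ^ 2^((code_enum g m)\<^sup>2)) \<longlonglongrightarrow> 1"
  proof (rule tendsto_lacunary_eigenvalue_power[where a="code_enum g"])
    show "j\<^sup>2 \<le> (code_enum g n)\<^sup>2" if "j < code_enum g n" for j n using that by (simp add: power_mono)
  qed (auto simp: filterlim_code_enum)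
  thus ?thesis by (simp add: test_seq_def)
qed

lemma tendsto_lacunary_eigenvalue_test_seq_even:
  assumes "\<forall>\<^sub>F m in sequentially. cis (2 * pi * (if code_enum g m \<in> A then 1/2 else 0)) = c"
  shows "(\<lambda>m. lacunary_eigenvalue A ^ test_seq g (2*m)) \<longlonglongrightarrow> c"
proof -
  have half: "(2::real) ^ (k\<^sup>2 - 1) * (1/2)^(k\<^sup>2) = 1/2" if "0 < k" for k :: nat
  proof -
    have "k\<^sup>2 = Suc (k\<^sup>2 - 1)" using that by simp
    hence "(1/2::real)^(k\<^sup>2) = (1/2)^(k\<^sup>2 - 1) * (1/2)" by (metis power_Suc2)
    hence "(2::real) ^ (k\<^sup>2 - 1) * (1/2)^(k\<^sup>2) = (2 ^ (k\<^sup>2 - 1) * (1/2)^(k\<^sup>2 - 1)) * (1/2)"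
      by (simp only: mult.assoc)
    thus ?thesis by (simp only: two_power_mult_half_power mult_1_left)
  qed
  have "(\<lambda>m. lacunary_eigenvalue A ^ 2^((code_enum g m)\<^sup>2 - 1)) \<longlonglongrightarrow> c"
  proof (rule tendsto_lacunary_eigenvalue_power[where a="code_enum g"])
    show "j\<^sup>2 \<le> (code_enum g n)\<^sup>2 - 1" if "j < code_enum g n" for j n
      using power_strict_mono[OF that, of 2] by simp
    show "\<forall>\<^sub>F n in sequentially. cis (2 * pi *
        (if code_enum g n \<in> A then 2^((code_enum g n)\<^sup>2 - 1) * (1/2)^((code_enum g n)\<^sup>2) else 0)) = c"
      using assms by eventually_elim (simp only: half[OF code_enum_pos])
  qed (auto simp: filterlim_code_enum)
  thus ?thesis by (simp add: test_seq_def)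
qed

lemma LIMSEQ_even_odd:
  fixes X :: "nat \<Rightarrow> 'b::metric_space"
  assumes "(\<lambda>m. X (2*m)) \<longlonglongrightarrow> L" "(\<lambda>m. X (Suc (2*m))) \<longlonglongrightarrow> L"
  shows "X \<longlonglongrightarrow> L"
proof (rule tendstoI)
  fix e :: real assume "e > 0"
  obtain N1 where N1: "\<And>m. m \<ge> N1 \<Longrightarrow> dist (X (2*m)) L < e"
    using tendstoD[OF assms(1) \<open>e > 0\<close>] by (auto simp: eventually_sequentially)
  obtain N2 where N2: "\<And>m. m \<ge> N2 \<Longrightarrow> dist (X (Suc (2*m))) L < e"
    using tendstoD[OF assms(2) \<open>e > 0\<close>] by (auto simp: eventually_sequentially)
  have "dist (X n) L < e" if "n \<ge> 2 * (N1 + N2)" for n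
  proof (cases "even n")
    case True
    then obtain m where "n = 2*m" by blast
    thus ?thesis using N1[of m] that by simp
  next
    case False
    then obtain m where "n = Suc (2*m)" using oddE by fastforce
    thus ?thesis using N2[of m] that by simp
  qed
  thus "\<forall>\<^sub>F n in sequentially. dist (X n) L < e" by (auto simp: eventually_sequentially)
qed

definition code_eigenvalue :: "(nat \<Rightarrow> bool) \<Rightarrow> complex" where
  "code_eigenvalue p = lacunary_eigenvalue (prefix_codes p)"

lemma tendsto_code_eigenvalue_test_seq:
  assumes "f \<noteq> g"
  shows "(\<lambda>n. code_eigenvalue f ^ test_seq g n) \<longlonglongrightarrow> 1"
proof (rule LIMSEQ_even_odd)
  show "(\<lambda>m. code_eigenvalue f ^ test_seq g (2*m)) \<longlonglongrightarrow> 1"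
    unfolding code_eigenvalue_def using eventually_code_enum_notin[OF assms]
    by (intro tendsto_lacunary_eigenvalue_test_seq_even) (auto elim: eventually_mono)
  show "(\<lambda>m. code_eigenvalue f ^ test_seq g (Suc (2*m))) \<longlonglongrightarrow> 1"
    unfolding code_eigenvalue_def by (rule tendsto_lacunary_eigenvalue_test_seq_odd)
qed

lemma tendsto_code_eigenvalue_test_seq_even_self:
  "(\<lambda>m. code_eigenvalue g ^ test_seq g (2*m)) \<longlonglongrightarrow> -1"
  unfolding code_eigenvalue_def
  by (rule tendsto_lacunary_eigenvalue_test_seq_even) (simp add: code_enum_in)


section \<open>Unitary diagonal operators\<close>

lemma norm_power_minus_one_le: "cmod z = 1 \<Longrightarrow> cmod (z ^ n - 1) \<le> 2"
  using norm_triangle_ineq4[of "z ^ n" 1] by (simp add: norm_power)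

text \<open>v_p \<mapsto> \<mu>_p v_p, extended by the identity on the orthogonal complement of the family.\<close>
definition unitary_diagonal_op :: "'i set \<Rightarrow> ('i \<Rightarrow> 'a::complex_inner) \<Rightarrow> ('i \<Rightarrow> complex) \<Rightarrow> 'a \<Rightarrow> 'a" where
  "unitary_diagonal_op D v \<mu> x = x + diagonal_op D v (\<lambda>p. \<mu> p - 1) x"

context
  fixes D :: "'i set" and v :: "'i \<Rightarrow> 'a::{complex_inner, complete_space}" and \<mu> :: "'i \<Rightarrow> complex"
  assumes ov: "orthonormal_on D v" and unimodular: "\<And>p. cmod (\<mu> p) = 1"
begin

lemma eigenvalue_power_bounded: "cmod (\<mu> p ^ n - 1) \<le> 2"
  by (rule norm_power_minus_one_le[OF unimodular])

lemma unitary_diagonal_op_power: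
  "(unitary_diagonal_op D v \<mu> ^^ n) x = x + diagonal_op D v (\<lambda>p. \<mu> p ^ n - 1) x"
proof (induction n)
  case 0
  show ?case by (simp add: diagonal_op_zero)
next
  case (Suc n)
  define y where "y = (unitary_diagonal_op D v \<mu> ^^ n) x"
  have coef_y: "cinner (v p) y = \<mu> p ^ n * cinner (v p) x" if "p \<in> D" for p
    unfolding y_def Suc.IH cinner_add_right
    by (simp add: cinner_diagonal_op[OF ov eigenvalue_power_bounded that] algebra_simps)
  have bounded: "cmod ((\<mu> p - 1) * \<mu> p ^ n) \<le> 2" for p
    using eigenvalue_power_bounded[of p 1] by (simp add: norm_mult norm_power unimodular)
  have "(unitary_diagonal_op D v \<mu> ^^ Suc n) x = y + diagonal_op D v (\<lambda>p. \<mu> p - 1) y"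
    by (simp add: y_def unitary_diagonal_op_def)
  also have "diagonal_op D v (\<lambda>p. \<mu> p - 1) y = diagonal_op D v (\<lambda>p. (\<mu> p - 1) * \<mu> p ^ n) x"
    by (rule diagonal_op_cong) (simp add: coef_y)
  also have "y = x + diagonal_op D v (\<lambda>p. \<mu> p ^ n - 1) x" by (simp add: y_def Suc.IH)
  also have "x + diagonal_op D v (\<lambda>p. \<mu> p ^ n - 1) x + diagonal_op D v (\<lambda>p. (\<mu> p - 1) * \<mu> p ^ n) x
      = x + diagonal_op D v (\<lambda>p. (\<mu> p ^ n - 1) + (\<mu> p - 1) * \<mu> p ^ n) x"
    by (simp add: add.assoc diagonal_op_add_fun[OF ov eigenvalue_power_bounded bounded])
  also have "diagonal_op D v (\<lambda>p. (\<mu> p ^ n - 1) + (\<mu> p - 1) * \<mu> p ^ n) x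
      = diagonal_op D v (\<lambda>p. \<mu> p ^ Suc n - 1) x"
    by (rule diagonal_op_cong) (simp add: algebra_simps)
  finally show ?case .
qed

lemma cinner_unitary_diagonal_op_power:
  "q \<in> D \<Longrightarrow> cinner (v q) ((unitary_diagonal_op D v \<mu> ^^ n) y) = \<mu> q ^ n * cinner (v q) y"
  by (simp add: unitary_diagonal_op_power cinner_add_right cinner_diagonal_op[OF ov eigenvalue_power_bounded]
      algebra_simps)

lemma bounded_clinear_unitary_diagonal_op: "bounded_clinear_op (unitary_diagonal_op D v \<mu>)"
proof -
  have bounded: "cmod (\<mu> p - 1) \<le> 2" for p using eigenvalue_power_bounded[of p 1] by simp
  have scaleC: "unitary_diagonal_op D v \<mu> (scaleC c x) = scaleC c (unitary_diagonal_op D v \<mu> x)" for c x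
    by (simp add: unitary_diagonal_op_def diagonal_op_scaleC[of D v "\<lambda>p. \<mu> p - 1" 2, OF ov bounded] scaleC_add_right)
  have "bounded_linear (unitary_diagonal_op D v \<mu>)"
  proof (rule bounded_linear_intro[where K=3])
    show "unitary_diagonal_op D v \<mu> (x + y) = unitary_diagonal_op D v \<mu> x + unitary_diagonal_op D v \<mu> y" for x y
      by (simp add: unitary_diagonal_op_def diagonal_op_add[of D v "\<lambda>p. \<mu> p - 1" 2, OF ov bounded] algebra_simps)
    show "unitary_diagonal_op D v \<mu> (r *\<^sub>R x) = r *\<^sub>R unitary_diagonal_op D v \<mu> x" for r x
      using scaleC[of "complex_of_real r" x] by (simp add: scaleC_of_real)
    show "norm (unitary_diagonal_op D v \<mu> x) \<le> norm x * 3" for x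
    proof -
      have "norm (unitary_diagonal_op D v \<mu> x) \<le> norm x + norm (diagonal_op D v (\<lambda>p. \<mu> p - 1) x)"
        unfolding unitary_diagonal_op_def by (rule norm_triangle_ineq)
      thus ?thesis using norm_diagonal_op_le[of D v "\<lambda>p. \<mu> p - 1" 2 x, OF ov bounded] by linarith
    qed
  qed
  thus ?thesis using scaleC by (simp add: bounded_clinear_op_def)
qed

text \<open>\<parallel>T^n x - x\<parallel>^2 \<le> \<Sum>_p |\<mu>_p^n - 1|^2 |\<langle>v_p, x\<rangle>|^2, and the right-hand side tends to 0 by
dominated convergence.\<close>
lemma unitary_diagonal_op_recurrent:
  assumes lim: "\<And>p. p \<in> D \<Longrightarrow> cinner (v p) x \<noteq> 0 \<Longrightarrow> (\<lambda>n. \<mu> p ^ \<omega> n) \<longlonglongrightarrow> 1"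
  shows "(\<lambda>n. (unitary_diagonal_op D v \<mu> ^^ \<omega> n) x) \<longlonglongrightarrow> x"
proof -
  define w where "w p = (cmod (cinner (v p) x))\<^sup>2" for p
  define h where "h n p = (cmod (\<mu> p ^ \<omega> n - 1))\<^sup>2" for n p
  have "(\<lambda>n. \<Sum>\<^sub>\<infinity>p\<in>D. h n p * w p) \<longlonglongrightarrow> 0"
  proof (rule tendsto_infsum_dominated)
    show "w summable_on D" unfolding w_def by (rule bessel_summable[OF ov])
    show "0 \<le> h n p \<and> h n p \<le> 4" for n p
      using power_mono[OF eigenvalue_power_bounded[of p "\<omega> n"] norm_ge_zero, of 2] by (simp add: h_def)
    show "(\<lambda>n. h n p) \<longlonglongrightarrow> 0" if "p \<in> D" "w p \<noteq> 0" for p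
      using tendsto_power[OF tendsto_norm[OF tendsto_diff[OF lim tendsto_const]], of p 1 2] that
      by (simp add: h_def w_def)
  qed (simp add: w_def)
  hence lim: "(\<lambda>n. sqrt (\<Sum>\<^sub>\<infinity>p\<in>D. h n p * w p)) \<longlonglongrightarrow> 0"
    using tendsto_real_sqrt by fastforce
  have bound: "norm ((unitary_diagonal_op D v \<mu> ^^ \<omega> n) x - x) \<le> sqrt (\<Sum>\<^sub>\<infinity>p\<in>D. h n p * w p)" for n
  proof -
    have "(norm ((unitary_diagonal_op D v \<mu> ^^ \<omega> n) x - x))\<^sup>2
        = (norm (diagonal_op D v (\<lambda>p. \<mu> p ^ \<omega> n - 1) x))\<^sup>2"
      by (simp add: unitary_diagonal_op_power)
    also have "\<dots> \<le> (\<Sum>\<^sub>\<infinity>p\<in>D. (cmod ((\<mu> p ^ \<omega> n - 1) * cinner (v p) x))\<^sup>2)"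
      by (rule norm_diagonal_op_square_le[OF ov eigenvalue_power_bounded])
    also have "\<dots> = (\<Sum>\<^sub>\<infinity>p\<in>D. h n p * w p)"
      by (simp add: h_def w_def norm_mult power_mult_distrib)
    finally show ?thesis by (rule real_le_rsqrt)
  qed
  have "(\<lambda>n. norm ((unitary_diagonal_op D v \<mu> ^^ \<omega> n) x - x)) \<longlonglongrightarrow> 0"
    by (rule tendsto_sandwich[where f="\<lambda>_. 0" and h="\<lambda>n. sqrt (\<Sum>\<^sub>\<infinity>p\<in>D. h n p * w p)"])
      (simp_all add: bound lim)
  thus ?thesis by (simp add: tendsto_norm_zero_iff LIM_zero_iff)
qed

lemma recL_unitary_diagonal_op_orthogonal:
  assumes "q \<in> D" "strict_mono r" "(\<lambda>n. \<mu> q ^ \<omega> (r n)) \<longlonglongrightarrow> c" "c \<noteq> 1"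
    and "y \<in> recL (unitary_diagonal_op D v \<mu>) \<omega>"
  shows "cinner (v q) y = 0"
proof -
  have "(\<lambda>n. cinner (v q) ((unitary_diagonal_op D v \<mu> ^^ \<omega> n) y)) \<longlonglongrightarrow> cinner (v q) y"
    using assms(5) by (intro bounded_linear.tendsto[OF bounded_linear_cinner_right]) (simp add: recL_def)
  hence "(\<lambda>n. \<mu> q ^ \<omega> n * cinner (v q) y) \<longlonglongrightarrow> cinner (v q) y"
    using cinner_unitary_diagonal_op_power[OF assms(1)] by simp
  hence "(\<lambda>n. \<mu> q ^ \<omega> (r n) * cinner (v q) y) \<longlonglongrightarrow> cinner (v q) y"
    using LIMSEQ_subseq_LIMSEQ[OF _ assms(2)] by (fastforce simp: o_def)
  moreover have "(\<lambda>n. \<mu> q ^ \<omega> (r n) * cinner (v q) y) \<longlonglongrightarrow> c * cinner (v q) y"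
    by (intro tendsto_mult assms(3) tendsto_const)
  ultimately have "c * cinner (v q) y = cinner (v q) y" using LIMSEQ_unique by blast
  thus ?thesis using \<open>c \<noteq> 1\<close> by (metis mult_cancel_right2)
qed

end

abbreviation code_op :: "(nat \<Rightarrow> bool) set \<Rightarrow> ((nat \<Rightarrow> bool) \<Rightarrow> 'a::complex_inner) \<Rightarrow> 'a \<Rightarrow> 'a" where
  "code_op D v \<equiv> unitary_diagonal_op D v code_eigenvalue"

lemma norm_code_eigenvalue: "cmod (code_eigenvalue p) = 1"
  by (simp add: code_eigenvalue_def)

context
  fixes D :: "(nat \<Rightarrow> bool) set" and v :: "(nat \<Rightarrow> bool) \<Rightarrow> 'a::{complex_inner, complete_space}"
  assumes ov: "orthonormal_on D v"
begin

lemma recurrent_code_op: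
  "(\<And>p. p \<in> D \<Longrightarrow> cinner (v p) x \<noteq> 0 \<Longrightarrow> (\<lambda>n. code_eigenvalue p ^ \<omega> n) \<longlonglongrightarrow> 1) \<Longrightarrow>
    x \<in> recL (code_op D v) \<omega>"
  unfolding recL_def
  using unitary_diagonal_op_recurrent[of D v code_eigenvalue, OF ov norm_code_eigenvalue] by blast

lemma recL_code_op_UNIV:
  "(\<And>p. (\<lambda>n. code_eigenvalue p ^ \<omega> n) \<longlonglongrightarrow> 1) \<Longrightarrow> recL (code_op D v) \<omega> = UNIV"
  using recurrent_code_op by blast

lemma recC_code_op:
  assumes "strict_mono \<omega>" "\<And>n. 0 < \<omega> n" "p \<in> D" "v p \<in> recL (code_op D v) \<omega>"
  shows "\<omega> \<in> recC (code_op D v)"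
  using assms norm_orthonormal_on[OF ov] unfolding recC_def recL_def by force

lemma rigid_code_op:
  assumes "D \<noteq> {}"
  shows "rigid (code_op D v)"
proof -
  have everywhere: "recL (code_op D v) rigidity_seq = UNIV"
    by (rule recL_code_op_UNIV) (simp add: code_eigenvalue_def tendsto_lacunary_eigenvalue_rigidity_seq)
  obtain p where "p \<in> D" using assms by blast
  have "rigidity_seq \<in> recC (code_op D v)"
    by (rule recC_code_op[OF strict_mono_rigidity_seq _ \<open>p \<in> D\<close>]) (simp_all add: rigidity_seq_def everywhere)
  with everywhere show ?thesis unfolding rigid_def by blast
qed

lemma orthogonal_in_recL_test_seq:
  "cinner (v g) x = 0 \<Longrightarrow> x \<in> recL (code_op D v) (test_seq g)"
  by (rule recurrent_code_op) (auto intro: tendsto_code_eigenvalue_test_seq)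

text \<open>The odd subsequence of test_seq g recurs everywhere, while along the even one the
v_g-coefficient is multiplied by numbers tending to -1.\<close>
lemma not_stationary_test_seq:
  assumes "g \<in> D"
  shows "\<not> stationary (code_op D v) (test_seq g)"
proof
  assume stationary: "stationary (code_op D v) (test_seq g)"
  have "strict_mono (\<lambda>m::nat. Suc (2*m))" by (rule strict_monoI_Suc) simp
  hence "closure (recL (code_op D v) (test_seq g)) = closure (recL (code_op D v) (test_seq g \<circ> (\<lambda>m. Suc (2*m))))"
    using stationary unfolding stationary_def by blast
  also have "recL (code_op D v) (test_seq g \<circ> (\<lambda>m. Suc (2*m))) = UNIV"
    by (rule recL_code_op_UNIV) (simp add: code_eigenvalue_def tendsto_lacunary_eigenvalue_test_seq_odd)
  finally have dense: "closure (recL (code_op D v) (test_seq g)) = UNIV" by simp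
  have "recL (code_op D v) (test_seq g) \<subseteq> {y. cinner (v g) y = 0}"
    using recL_unitary_diagonal_op_orthogonal[of D v code_eigenvalue, OF ov norm_code_eigenvalue assms,
        of "\<lambda>m. 2*m" "test_seq g", OF _ tendsto_code_eigenvalue_test_seq_even_self]
    by (auto simp: strict_mono_def)
  moreover have "closed {y. cinner (v g) y = 0}"
    by (rule closed_Collect_eq) (auto intro: linear_continuous_on bounded_linear_cinner_right)
  ultimately have "cinner (v g) (v g) = 0"
    using dense closure_minimal by blast
  thus False using orthonormal_onD[OF ov assms assms] by simp
qed

text \<open>A vector x has only countably many nonzero coefficients, so some v_g is orthogonal to it,
and test_seq g witnesses x \<notin> St.\<close>
lemma St_code_op_empty:
  assumes "uncountable D"
  shows "St (code_op D v) = {}"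
proof (rule ccontr)
  assume "St (code_op D v) \<noteq> {}"
  then obtain x where x: "x \<in> St (code_op D v)" by blast
  have "countable {p\<in>D. (cmod (cinner (v p) x))\<^sup>2 \<noteq> 0}"
    by (rule summable_countable_real[OF bessel_summable[OF ov]])
  then obtain g where g: "g \<in> D" "cinner (v g) x = 0"
    using assms countable_subset[of D] by (metis (mono_tags, lifting) mem_Collect_eq norm_eq_zero
        power_not_zero subsetI)
  obtain h where h: "h \<in> D" "h \<noteq> g"
    using assms countable_subset[of D "{g}"] by blast
  have "cinner (v g) (v h) = 0" using orthonormal_onD[OF ov g(1) h(1)] h(2) by simp
  hence "test_seq g \<in> recC (code_op D v)"
    using h(1) strict_mono_test_seq
    by (intro recC_code_op orthogonal_in_recL_test_seq) (auto simp: test_seq_def)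
  moreover have "x \<in> recL (code_op D v) (test_seq g)"
    using g(2) by (rule orthogonal_in_recL_test_seq)
  ultimately have "stationary (code_op D v) (test_seq g)"
    using x by (auto simp: St_def)
  thus False using not_stationary_test_seq[OF g(1)] by contradiction
qed

end

theorem proposition4p7:
  assumes "\<not> separable_space (euclidean :: ('a::{complex_inner, complete_space}) topology)"
  shows "\<exists>T :: 'a \<Rightarrow> 'a. bounded_clinear_op T \<and> rigid T \<and> St T = {}"
proof -
  obtain D and v :: "(nat \<Rightarrow> bool) \<Rightarrow> 'a" where ov: "orthonormal_on D v" and "uncountable D"
    using uncountable_orthonormal_family[OF assms] by blast
  hence "D \<noteq> {}" by auto
  have "bounded_clinear_op (code_op D v)"
    by (rule bounded_clinear_unitary_diagonal_op[of D v code_eigenvalue, OF ov norm_code_eigenvalue])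
  moreover have "rigid (code_op D v)" by (rule rigid_code_op[OF ov \<open>D \<noteq> {}\<close>])
  moreover have "St (code_op D v) = {}" by (rule St_code_op_empty[OF ov \<open>uncountable D\<close>])
  ultimately show ?thesis by blast
qed

end
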